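(* Assume $b_1\ne b_2, c_1=c_2$ or $b_1=b_2, c_1\ne c_2$. 1. If $a_1=a_2$, then both $\check{f}$ and $\widehat{f}$ have no roots. 2. If $a_1\ne a_2$, then either $\check{f}$ or $\widehat{f}$, but not both, has exactly one root $x_0$ at which it changes sign. The corresponding derivative is nonzero at $x_0$.
   Context: A function $f:\mathbb{R}^+\to\mathbb{R}^+$ is called strongly hyperbolic if: (1) $\lim_{x\to 0+} f(x)=+\infty$ and $\lim_{x\to+\infty} f(x)=0$; (2) $f$ is strictly convex; (3) for each $b\in\mathbb{R}$, $\lim_{x\to+\infty} f(x+b)/f(x)=1$; (4) $f$ is differentiable; (5) $\ln|f'(x)|$ is strictly convex. Let $f_1,f_2$ be strongly hyperbolic functions, let $a_1,a_2>0$ and $b_1,b_2,c_1,c_2\in\mathbb{R}$. Define $\check{f}:(\max\{-b_1,-b_2\},+\infty)\to\mathbb{R}$, $\check{f}(x)=a_1f_1(x+b_1)+c_1-a_2f_1(x+b_2)-c_2$, and $\widehat{f}:(-\infty,\min\{-b_1,-b_2\})\to\mathbb{R}$, $\widehat{f}(x)=-a_1f_2(-x-b_1)+c_1+a_2f_2(-x-b_2)-c_2$. *)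

theory Defs
  imports "HOL-Analysis.Analysis"
begin

definition strictly_convex_on :: "real set \<Rightarrow> (real \<Rightarrow> real) \<Rightarrow> bool" where
  "strictly_convex_on S f \<longleftrightarrow>
     (\<forall>x\<in>S. \<forall>y\<in>S. \<forall>t::real. x \<noteq> y \<and> 0 < t \<and> t < 1 \<longrightarrow>
        f (t * x + (1 - t) * y) < t * f x + (1 - t) * f y)"

text \<open>Strongly hyperbolic functions f : (0,inf) -> (0,inf); only the values on {0<..} matter.\<close>
definition strongly_hyperbolic :: "(real \<Rightarrow> real) \<Rightarrow> bool" where
  "strongly_hyperbolic f \<longleftrightarrow>
     (\<forall>x>0. f x > 0) \<and>
     filterlim f at_top (at_right 0) \<and>
     (f \<longlongrightarrow> 0) at_top \<and>
     strictly_convex_on {0<..} f \<and>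
     (\<forall>b::real. ((\<lambda>x. f (x + b) / f x) \<longlongrightarrow> 1) at_top) \<and>
     (\<forall>x>0. f differentiable (at x)) \<and>
     strictly_convex_on {0<..} (\<lambda>x. ln \<bar>deriv f x\<bar>)"

definition changes_sign_at :: "(real \<Rightarrow> real) \<Rightarrow> real \<Rightarrow> bool" where
  "changes_sign_at g x0 \<longleftrightarrow> (\<exists>\<delta>>0.
     ((\<forall>x\<in>{x0-\<delta><..<x0}. g x < 0) \<and> (\<forall>x\<in>{x0<..<x0+\<delta>}. g x > 0)) \<or>
     ((\<forall>x\<in>{x0-\<delta><..<x0}. g x > 0) \<and> (\<forall>x\<in>{x0<..<x0+\<delta>}. g x < 0)))"

definition good_unique_root :: "(real \<Rightarrow> real) \<Rightarrow> real set \<Rightarrow> bool" where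
  "good_unique_root g D \<longleftrightarrow> (\<exists>!x. x \<in> D \<and> g x = 0) \<and>
     (\<forall>x0\<in>D. g x0 = 0 \<longrightarrow> changes_sign_at g x0 \<and>
        (\<exists>d. (g has_real_derivative d) (at x0) \<and> d \<noteq> 0))"

end

theory Submission
  imports Defs
begin

(* After a shift of the variable, fchk is either (a1 - a2) (f1 - t) for a constant t (when b1 = b2)
   or, up to sign, a1 f1 u - a2 f1 (u + d) with d > 0; fhat is the same kind of expression for f2
   after the reflection x -> -x, which swaps the roles of c1 and c2 and reverses the order of the
   shifts. In the first case the roots form a level set of the decreasing bijection
   f1 : (0, +inf) -> (0, +inf), so there is one iff t > 0. In the second case u is a root iff
   f1 u / f1 (u + d) = a2 / a1; Cauchy's mean value theorem together with the log-convexity of |f1'|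
   makes this quotient strictly decreasing, from +inf at 0 to 1 at +inf, so there is a root iff
   a1 < a2. *)

lemma strictly_convex_onD:
  assumes "strictly_convex_on S f" "x \<in> S" "y \<in> S" "x \<noteq> y" "0 < t" "t < 1"
  shows "f (t * x + (1 - t) * y) < t * f x + (1 - t) * f y"
  using assms unfolding strictly_convex_on_def by blast

lemma strictly_convex_on_imp_convex_on:
  assumes "strictly_convex_on S f" "convex S"
  shows "convex_on S f"
proof (rule convex_onI)
  fix t x y :: real assume "0 < t" "t < 1" "x \<in> S" "y \<in> S"
  show "f ((1 - t) *\<^sub>R x + t *\<^sub>R y) \<le> (1 - t) * f x + t * f y"
  proof (cases "x = y")
    case False
    then show ?thesis
      using strictly_convex_onD[OF assms(1), of y x t] \<open>x \<in> S\<close> \<open>y \<in> S\<close> \<open>0 < t\<close> \<open>t < 1\<close>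
      by (simp add: algebra_simps)
  qed (simp add: algebra_simps)
qed (fact assms(2))

lemma strictly_convex_on_slope_less:
  assumes "strictly_convex_on S p" "a \<in> S" "b \<in> S" "c \<in> S" "a < b" "b < c"
  shows "(p b - p a) / (b - a) < (p c - p a) / (c - a)"
    and "(p c - p a) / (c - a) < (p c - p b) / (c - b)"
proof -
  define t where "t = (c - b) / (c - a)"
  have t: "0 < t" "t < 1"
    using assms(5,6) by (auto simp: t_def)
  have ct: "(c - a) * t = c - b"
    using assms(5,6) by (simp add: t_def)
  have "b = t * a + (1 - t) * c"
    using ct by (simp add: algebra_simps)
  then have "p b < t * p a + (1 - t) * p c"
    using strictly_convex_onD[OF assms(1,2,4) _ t] assms(5,6) by simp
  then have "(c - a) * p b < (c - a) * (t * p a + (1 - t) * p c)"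
    using assms(5,6) by simp
  also have "\<dots> = ((c - a) * t) * p a + ((c - a) - (c - a) * t) * p c"
    by (simp add: algebra_simps)
  also have "\<dots> = (c - b) * p a + (b - a) * p c"
    unfolding ct by simp
  finally have "(c - a) * p b < (c - b) * p a + (b - a) * p c" .
  then show "(p b - p a) / (b - a) < (p c - p a) / (c - a)"
    and "(p c - p a) / (c - a) < (p c - p b) / (c - b)"
    using assms(5,6) by (simp_all add: field_simps)
qed

lemma strictly_convex_on_increment_less:
  assumes "strictly_convex_on {0<..} p" "0 < x" "x < y" "0 < d"
  shows "p (x + d) - p x < p (y + d) - p y"
proof -
  have "(p (x + d) - p x) / d < (p (y + d) - p x) / (y + d - x)"
    using strictly_convex_on_slope_less(1)[OF assms(1), of x "x + d" "y + d"] assms by simp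
  also have "\<dots> < (p (y + d) - p y) / d"
    using strictly_convex_on_slope_less(2)[OF assms(1), of x y "y + d"] assms by simp
  finally show ?thesis
    using assms(4) by (simp add: divide_less_cancel)
qed

lemma strongly_hyperbolic_pos:
  "strongly_hyperbolic f \<Longrightarrow> 0 < x \<Longrightarrow> 0 < f x"
  unfolding strongly_hyperbolic_def by auto

lemma strongly_hyperbolic_has_deriv:
  "strongly_hyperbolic f \<Longrightarrow> 0 < x \<Longrightarrow> (f has_real_derivative deriv f x) (at x)"
  unfolding strongly_hyperbolic_def by (auto simp: DERIV_deriv_iff_real_differentiable)

lemma strongly_hyperbolic_shift_has_deriv:
  "strongly_hyperbolic f \<Longrightarrow> 0 < x + d \<Longrightarrow>
    ((\<lambda>y. f (y + d)) has_real_derivative deriv f (x + d)) (at x)"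
  unfolding DERIV_shift[symmetric] by (rule strongly_hyperbolic_has_deriv)

lemma strongly_hyperbolic_continuous_on:
  "strongly_hyperbolic f \<Longrightarrow> S \<subseteq> {0<..} \<Longrightarrow> continuous_on S f"
  by (intro continuous_at_imp_continuous_on) (auto intro: DERIV_isCont strongly_hyperbolic_has_deriv)

text \<open>A convex function tending to 0 at infinity lies above its tangents, so none of its
  tangents can have nonnegative slope.\<close>
lemma strongly_hyperbolic_deriv_neg:
  assumes sh: "strongly_hyperbolic f" and "0 < x"
  shows "deriv f x < 0"
proof (rule ccontr)
  assume "\<not> deriv f x < 0"
  have convex: "convex_on {0<..} f" and lim: "(f \<longlongrightarrow> 0) at_top"
    using sh strictly_convex_on_imp_convex_on[of "{0<..}" f]
    unfolding strongly_hyperbolic_def by simp_all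
  have tangent: "f x + deriv f x * (y - x) \<le> f y" if "0 < y" for y
    using convex_on_imp_above_tangent[OF convex, of x y "deriv f x"] that \<open>0 < x\<close>
      has_field_derivative_at_within[OF strongly_hyperbolic_has_deriv[OF sh \<open>0 < x\<close>]]
    by (simp add: interior_open)
  have "\<forall>\<^sub>F y in at_top. f y < f x"
    by (rule order_tendstoD(2)[OF lim strongly_hyperbolic_pos[OF sh \<open>0 < x\<close>]])
  then obtain N where N: "\<And>y. N \<le> y \<Longrightarrow> f y < f x"
    unfolding eventually_at_top_linorder by blast
  define y where "y = max N x"
  have "x \<le> y" "f y < f x"
    using N by (auto simp: y_def)
  moreover have "0 \<le> deriv f x * (y - x)"
    using \<open>\<not> deriv f x < 0\<close> \<open>x \<le> y\<close> by (intro mult_nonneg_nonneg) auto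
  ultimately show False
    using tangent[of y] \<open>0 < x\<close> by linarith
qed

lemma strongly_hyperbolic_decreasing:
  assumes sh: "strongly_hyperbolic f" and "0 < x" "x < y"
  shows "f y < f x"
proof (rule DERIV_neg_imp_decreasing_open[OF \<open>x < y\<close>])
  show "\<exists>d. (f has_real_derivative d) (at z) \<and> d < 0" if "x < z" "z < y" for z
    using that \<open>0 < x\<close> strongly_hyperbolic_has_deriv[OF sh, of z] strongly_hyperbolic_deriv_neg[OF sh, of z]
    by auto
qed (rule strongly_hyperbolic_continuous_on[OF sh], use \<open>0 < x\<close> in auto)

lemma IVT_at_right_at_top:
  fixes g :: "real \<Rightarrow> real"
  assumes "continuous_on {a<..} g" "filterlim g at_top (at_right a)" "(g \<longlongrightarrow> L) at_top" "L < t"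
  shows "\<exists>x>a. g x = t"
proof -
  obtain b where b: "a < b" "\<And>y. a < y \<Longrightarrow> y < b \<Longrightarrow> t < g y"
    using assms(2) unfolding filterlim_at_top_dense eventually_at_right_field by blast
  define u where "u = (a + b) / 2"
  have u: "a < u" "t \<le> g u"
    using b by (auto simp: u_def intro: less_imp_le)
  obtain N where N: "\<And>y. N \<le> y \<Longrightarrow> g y < t"
    using order_tendstoD(2)[OF assms(3,4)] unfolding eventually_at_top_linorder by blast
  define v where "v = max N u"
  have v: "u \<le> v" "g v \<le> t"
    using N[of v] by (auto simp: v_def)
  have "continuous_on {u..v} g"
    by (rule continuous_on_subset[OF assms(1)]) (use u in auto)
  then obtain x where "u \<le> x" "g x = t"
    using IVT2'[of g v t u] u v by blast
  then show ?thesis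
    using u(1) by (intro exI[of _ x]) simp
qed

lemma strongly_hyperbolic_attains:
  assumes "strongly_hyperbolic f" "0 < t"
  shows "\<exists>x>0. f x = t"
proof (rule IVT_at_right_at_top[of 0 f 0])
  show "continuous_on {0<..} f"
    by (rule strongly_hyperbolic_continuous_on[OF assms(1)]) simp
qed (use assms in \<open>simp_all add: strongly_hyperbolic_def\<close>)

lemma strongly_hyperbolic_deriv_shift_cross_less:
  assumes sh: "strongly_hyperbolic f" and "0 < x" "x < y" "0 < d"
  shows "deriv f (x + d) * deriv f y < deriv f (y + d) * deriv f x"
proof -
  have neg: "deriv f x < 0" "deriv f y < 0" "deriv f (x + d) < 0" "deriv f (y + d) < 0"
    using strongly_hyperbolic_deriv_neg[OF sh] assms(2-4) by simp_all
  have "strictly_convex_on {0<..} (\<lambda>x. ln \<bar>deriv f x\<bar>)"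
    using sh unfolding strongly_hyperbolic_def by simp
  from strictly_convex_on_increment_less[OF this assms(2-4)]
  have "ln (\<bar>deriv f (x + d)\<bar> * \<bar>deriv f y\<bar>) < ln (\<bar>deriv f (y + d)\<bar> * \<bar>deriv f x\<bar>)"
    using neg by (simp only: ln_mult_pos zero_less_abs_iff)
  then have "\<bar>deriv f (x + d)\<bar> * \<bar>deriv f y\<bar> < \<bar>deriv f (y + d)\<bar> * \<bar>deriv f x\<bar>"
    using ln_less_cancel_iff[of "\<bar>deriv f (x + d)\<bar> * \<bar>deriv f y\<bar>"
        "\<bar>deriv f (y + d)\<bar> * \<bar>deriv f x\<bar>"] neg
    by (simp add: mult_neg_neg del: ln_less_cancel_iff)
  then show ?thesis
    using neg by simp
qed

text \<open>Cauchy's mean value theorem for f and its shift on [x, y], combined with the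
  log-convexity of the derivative.\<close>
lemma strongly_hyperbolic_chord_shift_less:
  assumes sh: "strongly_hyperbolic f" and "0 < x" "x < y" "0 < d"
  shows "(f (x + d) - f (y + d)) * deriv f x < (f x - f y) * deriv f (x + d)"
proof -
  have deriv: "(f has_real_derivative deriv f z) (at z)"
    and shift_deriv: "((\<lambda>z. f (z + d)) has_real_derivative deriv f (z + d)) (at z)" if "x \<le> z" for z
    using that assms(2,4) strongly_hyperbolic_has_deriv[OF sh] strongly_hyperbolic_shift_has_deriv[OF sh]
    by simp_all
  obtain c where c: "x < c" "c < y"
    and mvt: "(f y - f x) * deriv f (c + d) = (f (y + d) - f (x + d)) * deriv f c"
    using GMVT'[OF \<open>x < y\<close>, of f "\<lambda>z. f (z + d)" "\<lambda>z. deriv f (z + d)" "deriv f"]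
      deriv shift_deriv DERIV_isCont[OF deriv] DERIV_isCont[OF shift_deriv] by force
  have "(f x - f y) * (deriv f (x + d) * deriv f c) < (f x - f y) * (deriv f (c + d) * deriv f x)"
    using strongly_hyperbolic_deriv_shift_cross_less[OF sh \<open>0 < x\<close> c(1) \<open>0 < d\<close>]
      strongly_hyperbolic_decreasing[OF sh \<open>0 < x\<close> \<open>x < y\<close>] by simp
  also have "\<dots> = - ((f y - f x) * deriv f (c + d)) * deriv f x"
    by (simp add: algebra_simps)
  also have "\<dots> = (f (x + d) - f (y + d)) * deriv f x * deriv f c"
    unfolding mvt by (simp add: algebra_simps)
  finally have "(f x - f y) * deriv f (x + d) * deriv f c
      < (f (x + d) - f (y + d)) * deriv f x * deriv f c"
    by (simp add: algebra_simps)
  then show ?thesis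
    using strongly_hyperbolic_deriv_neg[OF sh, of c] c assms(2) by (simp add: mult_less_cancel_right)
qed

lemma strongly_hyperbolic_shift_cross_le:
  assumes sh: "strongly_hyperbolic f" and "0 < x" "0 < d"
  shows "f (x + d) * deriv f x \<le> f x * deriv f (x + d)"
proof -
  have lim: "(f \<longlongrightarrow> 0) at_top"
    using sh unfolding strongly_hyperbolic_def by simp
  have "filterlim (\<lambda>y. y + d) at_top at_top"
    using filterlim_tendsto_add_at_top[OF tendsto_const filterlim_ident, of d] by (simp add: add.commute)
  then have shift_lim: "((\<lambda>y. f (y + d)) \<longlongrightarrow> 0) at_top"
    by (rule filterlim_compose[OF lim])
  have "((\<lambda>y. (f x - f y) * deriv f (x + d)) \<longlongrightarrow> (f x - 0) * deriv f (x + d)) at_top"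
    and "((\<lambda>y. (f (x + d) - f (y + d)) * deriv f x) \<longlongrightarrow> (f (x + d) - 0) * deriv f x) at_top"
    by (intro tendsto_intros lim shift_lim)+
  moreover have "\<forall>\<^sub>F y in at_top. (f (x + d) - f (y + d)) * deriv f x \<le> (f x - f y) * deriv f (x + d)"
    using eventually_gt_at_top[of x]
    by eventually_elim
      (use strongly_hyperbolic_chord_shift_less[OF sh \<open>0 < x\<close> _ \<open>0 < d\<close>] in \<open>simp add: less_imp_le\<close>)
  ultimately show ?thesis
    using tendsto_le[OF trivial_limit_at_top_linorder] by simp
qed

text \<open>Strictness comes from the chord inequality on [x, x + 1], the limit inequality at x + 1
  bridging the rest.\<close>
lemma strongly_hyperbolic_shift_cross_less:
  assumes sh: "strongly_hyperbolic f" and "0 < x" "0 < d"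
  shows "f (x + d) * deriv f x < f x * deriv f (x + d)"
proof -
  have x1: "0 < x + 1" "x < x + 1"
    using \<open>0 < x\<close> by simp_all
  have chord: "(f (x + d) - f (x + 1 + d)) * deriv f x < (f x - f (x + 1)) * deriv f (x + d)"
    using strongly_hyperbolic_chord_shift_less[OF sh \<open>0 < x\<close> x1(2) \<open>0 < d\<close>] .
  have "f (x + 1) * (deriv f (x + d) * deriv f (x + 1)) < f (x + 1) * (deriv f (x + 1 + d) * deriv f x)"
    using strongly_hyperbolic_deriv_shift_cross_less[OF sh \<open>0 < x\<close> x1(2) \<open>0 < d\<close>]
      strongly_hyperbolic_pos[OF sh x1(1)] by simp
  also have "\<dots> \<le> f (x + 1 + d) * deriv f (x + 1) * deriv f x"
    using strongly_hyperbolic_shift_cross_le[OF sh x1(1) \<open>0 < d\<close>]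
      strongly_hyperbolic_deriv_neg[OF sh \<open>0 < x\<close>]
    by (simp add: mult.assoc[symmetric] mult_right_mono_neg)
  finally have "f (x + 1) * deriv f (x + d) * deriv f (x + 1)
      < f (x + 1 + d) * deriv f x * deriv f (x + 1)"
    by (simp add: algebra_simps)
  then have "f (x + 1 + d) * deriv f x < f (x + 1) * deriv f (x + d)"
    using strongly_hyperbolic_deriv_neg[OF sh x1(1)] by (simp add: mult_less_cancel_right)
  with chord show ?thesis
    by (simp add: algebra_simps)
qed

lemma strongly_hyperbolic_shift_quotient_has_deriv:
  assumes sh: "strongly_hyperbolic f" and "0 < d" "0 < z"
  shows "((\<lambda>z. f z / f (z + d)) has_real_derivative
      (deriv f z * f (z + d) - f z * deriv f (z + d)) / (f (z + d) * f (z + d))) (at z)"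
  using DERIV_divide[OF strongly_hyperbolic_has_deriv[OF sh \<open>0 < z\<close>]
      strongly_hyperbolic_shift_has_deriv[OF sh, of z d]] assms strongly_hyperbolic_pos[OF sh, of "z + d"]
  by simp

lemma strongly_hyperbolic_shift_quotient_continuous_on:
  "strongly_hyperbolic f \<Longrightarrow> 0 < d \<Longrightarrow> S \<subseteq> {0<..} \<Longrightarrow> continuous_on S (\<lambda>z. f z / f (z + d))"
  by (intro continuous_at_imp_continuous_on)
    (auto intro: DERIV_isCont strongly_hyperbolic_shift_quotient_has_deriv)

lemma strongly_hyperbolic_shift_quotient_decreasing:
  assumes sh: "strongly_hyperbolic f" and "0 < d" "0 < u" "u < v"
  shows "f v / f (v + d) < f u / f (u + d)"
proof (rule DERIV_neg_imp_decreasing_open[OF \<open>u < v\<close>])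
  fix z assume "u < z" "z < v"
  then have "0 < z" "0 < f (z + d)"
    using assms strongly_hyperbolic_pos[OF sh, of "z + d"] by simp_all
  have "(deriv f z * f (z + d) - f z * deriv f (z + d)) / (f (z + d) * f (z + d)) < 0"
    using strongly_hyperbolic_shift_cross_less[OF sh \<open>0 < z\<close> \<open>0 < d\<close>] \<open>0 < f (z + d)\<close>
    by (intro divide_neg_pos) (simp_all add: algebra_simps)
  then show "\<exists>y. ((\<lambda>z. f z / f (z + d)) has_real_derivative y) (at z) \<and> y < 0"
    using strongly_hyperbolic_shift_quotient_has_deriv[OF sh \<open>0 < d\<close> \<open>0 < z\<close>] by blast
qed (rule strongly_hyperbolic_shift_quotient_continuous_on[OF sh \<open>0 < d\<close>], use \<open>0 < u\<close> in auto)

lemma strongly_hyperbolic_shift_quotient_attains: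
  assumes sh: "strongly_hyperbolic f" and "0 < d" "1 < t"
  shows "\<exists>u>0. f u / f (u + d) = t"
proof (rule IVT_at_right_at_top[of 0 _ 1])
  show "continuous_on {0<..} (\<lambda>u. f u / f (u + d))"
    by (rule strongly_hyperbolic_shift_quotient_continuous_on[OF sh \<open>0 < d\<close>]) simp
next
  have "isCont f (0 + d)"
    using DERIV_isCont[OF strongly_hyperbolic_has_deriv[OF sh \<open>0 < d\<close>]] by simp
  then have "((\<lambda>u. f (u + d)) \<longlongrightarrow> f (0 + d)) (at_right 0)"
    by (rule isCont_tendsto_compose[where f = "\<lambda>u. u + d"]) (intro tendsto_intros)
  then have inverse_shift: "((\<lambda>u. inverse (f (u + d))) \<longlongrightarrow> inverse (f d)) (at_right 0)"
    using strongly_hyperbolic_pos[OF sh \<open>0 < d\<close>] by (intro tendsto_inverse) simp_all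
  have "filterlim f at_top (at_right 0)"
    using sh unfolding strongly_hyperbolic_def by simp
  then show "filterlim (\<lambda>u. f u / f (u + d)) at_top (at_right 0)"
    unfolding divide_inverse using strongly_hyperbolic_pos[OF sh \<open>0 < d\<close>]
    by (intro filterlim_at_top_mult_tendsto_pos[OF inverse_shift]) simp_all
next
  have "((\<lambda>u. f (u + d) / f u) \<longlongrightarrow> 1) at_top"
    using sh unfolding strongly_hyperbolic_def by simp
  then have "((\<lambda>u. inverse (f (u + d) / f u)) \<longlongrightarrow> inverse 1) at_top"
    by (rule tendsto_inverse) simp
  then show "((\<lambda>u. f u / f (u + d)) \<longlongrightarrow> 1) at_top"
    by simp
qed (fact \<open>1 < t\<close>)

lemma good_unique_root_of_sign_change:
  assumes "a < x0" "g x0 = 0"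
    and pos: "\<And>x. a < x \<Longrightarrow> x < x0 \<Longrightarrow> 0 < g x" and neg: "\<And>x. x0 < x \<Longrightarrow> g x < 0"
    and "(g has_real_derivative d) (at x0)" "d \<noteq> 0"
  shows "good_unique_root g {a<..}"
proof -
  have unique: "x = x0" if "a < x" "g x = 0" for x
    using pos[of x] neg[of x] that by (cases x x0 rule: linorder_cases) auto
  have "changes_sign_at g x0"
    unfolding changes_sign_at_def using pos neg \<open>a < x0\<close> by (intro exI[of _ "x0 - a"]) auto
  show ?thesis
    unfolding good_unique_root_def
  proof (intro conjI ballI impI)
    show "\<exists>!x. x \<in> {a<..} \<and> g x = 0"
      using assms(1,2) unique by blast
  next
    fix x assume "x \<in> {a<..}" "g x = 0"
    then have "x = x0"
      using unique by simp
    show "changes_sign_at g x"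
      using \<open>x = x0\<close> \<open>changes_sign_at g x0\<close> by simp
    show "\<exists>d. (g has_real_derivative d) (at x) \<and> d \<noteq> 0"
      using \<open>x = x0\<close> assms(5,6) by blast
  qed
qed

lemma changes_sign_at_cmult:
  assumes "c \<noteq> 0" "changes_sign_at g x0"
  shows "changes_sign_at (\<lambda>x. c * g x) x0"
proof -
  obtain \<delta> :: real where "0 < \<delta>"
    and sw: "(\<forall>x\<in>{x0-\<delta><..<x0}. g x < 0) \<and> (\<forall>x\<in>{x0<..<x0+\<delta>}. g x > 0) \<or>
         (\<forall>x\<in>{x0-\<delta><..<x0}. g x > 0) \<and> (\<forall>x\<in>{x0<..<x0+\<delta>}. g x < 0)"
    using assms(2) unfolding changes_sign_at_def by blast
  show ?thesis
  proof (cases "0 < c")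
    case True
    then have "\<And>x. c * g x < 0 \<longleftrightarrow> g x < 0" "\<And>x. 0 < c * g x \<longleftrightarrow> 0 < g x"
      by (auto simp: mult_less_0_iff zero_less_mult_iff)
    then show ?thesis
      unfolding changes_sign_at_def using \<open>0 < \<delta>\<close> sw by (intro exI[of _ \<delta>]) simp
  next
    case False
    then have "\<And>x. c * g x < 0 \<longleftrightarrow> 0 < g x" "\<And>x. 0 < c * g x \<longleftrightarrow> g x < 0"
      using assms(1) by (auto simp: mult_less_0_iff zero_less_mult_iff)
    then show ?thesis
      unfolding changes_sign_at_def using \<open>0 < \<delta>\<close> sw by (intro exI[of _ \<delta>]) (simp add: disj_commute)
  qed
qed

lemma good_unique_root_cmult:
  assumes "c \<noteq> 0" "good_unique_root g D"
  shows "good_unique_root (\<lambda>x. c * g x) D"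
  unfolding good_unique_root_def
proof (intro conjI ballI impI)
  show "\<exists>!x. x \<in> D \<and> c * g x = 0"
    using assms unfolding good_unique_root_def by simp
next
  fix x0 assume "x0 \<in> D" "c * g x0 = 0"
  then have "g x0 = 0"
    using assms(1) by simp
  then obtain d where "changes_sign_at g x0" and d: "(g has_real_derivative d) (at x0)" "d \<noteq> 0"
    using assms(2) \<open>x0 \<in> D\<close> unfolding good_unique_root_def by blast
  then show "changes_sign_at (\<lambda>x. c * g x) x0"
    using changes_sign_at_cmult[OF assms(1)] by blast
  show "\<exists>d. ((\<lambda>x. c * g x) has_real_derivative d) (at x0) \<and> d \<noteq> 0"
    using DERIV_cmult[OF d(1), of c] d(2) assms(1) by auto
qed

lemma good_unique_root_uminus:
  "good_unique_root g D \<Longrightarrow> good_unique_root (\<lambda>x. - g x) D"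
  using good_unique_root_cmult[of "-1" g D] by simp

lemma changes_sign_at_reflect:
  assumes "changes_sign_at g (- x0)"
  shows "changes_sign_at (\<lambda>x. g (- x)) x0"
proof -
  obtain \<delta> :: real where "0 < \<delta>"
    and sw: "(\<forall>y\<in>{- x0-\<delta><..<- x0}. g y < 0) \<and> (\<forall>y\<in>{- x0<..<- x0+\<delta>}. g y > 0) \<or>
         (\<forall>y\<in>{- x0-\<delta><..<- x0}. g y > 0) \<and> (\<forall>y\<in>{- x0<..<- x0+\<delta>}. g y < 0)"
    using assms unfolding changes_sign_at_def by blast
  have "\<forall>x\<in>{x0-\<delta><..<x0}. - x \<in> {- x0<..<- x0+\<delta>}" "\<forall>x\<in>{x0<..<x0+\<delta>}. - x \<in> {- x0-\<delta><..<- x0}"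
    by auto
  then show ?thesis
    unfolding changes_sign_at_def using sw \<open>0 < \<delta>\<close> by (intro exI[of _ \<delta>]) blast
qed

lemma changes_sign_at_affine_pos:
  assumes "0 < s" "changes_sign_at g (s * x0 + c)"
  shows "changes_sign_at (\<lambda>x. g (s * x + c)) x0"
proof -
  define y0 where "y0 = s * x0 + c"
  obtain \<delta> :: real where "0 < \<delta>"
    and sw: "(\<forall>y\<in>{y0-\<delta><..<y0}. g y < 0) \<and> (\<forall>y\<in>{y0<..<y0+\<delta>}. g y > 0) \<or>
         (\<forall>y\<in>{y0-\<delta><..<y0}. g y > 0) \<and> (\<forall>y\<in>{y0<..<y0+\<delta>}. g y < 0)"
    using assms(2) unfolding changes_sign_at_def y0_def by blast
  define \<epsilon> where "\<epsilon> = \<delta> / s"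
  have "0 < \<epsilon>"
    using \<open>0 < \<delta>\<close> \<open>0 < s\<close> by (simp add: \<epsilon>_def)
  have "\<forall>x\<in>{x0-\<epsilon><..<x0}. s * x + c \<in> {y0-\<delta><..<y0}" "\<forall>x\<in>{x0<..<x0+\<epsilon>}. s * x + c \<in> {y0<..<y0+\<delta>}"
    using \<open>0 < s\<close> by (auto simp: y0_def \<epsilon>_def field_simps)
  then show ?thesis
    unfolding changes_sign_at_def using sw \<open>0 < \<epsilon>\<close> by (intro exI[of _ \<epsilon>]) blast
qed

lemma changes_sign_at_affine:
  assumes "s \<noteq> 0" "changes_sign_at g (s * x0 + c)"
  shows "changes_sign_at (\<lambda>x. g (s * x + c)) x0"
proof (cases "0 < s")
  case True
  then show ?thesis
    using changes_sign_at_affine_pos assms(2) by blast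
next
  case False
  then have "changes_sign_at (\<lambda>y. g ((- s) * y + c)) (- x0)"
    using changes_sign_at_affine_pos[of "- s" g "- x0" c] assms by simp
  then show ?thesis
    using changes_sign_at_reflect by fastforce
qed

lemma good_unique_root_affine:
  assumes "s \<noteq> 0" "good_unique_root g D"
  shows "good_unique_root (\<lambda>x. g (s * x + c)) {x. s * x + c \<in> D}"
  unfolding good_unique_root_def
proof (intro conjI ballI impI)
  obtain y0 where y0: "y0 \<in> D" "g y0 = 0" and unique: "\<And>y. y \<in> D \<Longrightarrow> g y = 0 \<Longrightarrow> y = y0"
    using assms(2) unfolding good_unique_root_def by blast
  show "\<exists>!x. x \<in> {x. s * x + c \<in> D} \<and> g (s * x + c) = 0"
  proof (rule ex1I[of _ "(y0 - c) / s"])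
    show "(y0 - c) / s \<in> {x. s * x + c \<in> D} \<and> g (s * ((y0 - c) / s) + c) = 0"
      using y0 assms(1) by simp
  next
    fix x assume "x \<in> {x. s * x + c \<in> D} \<and> g (s * x + c) = 0"
    then have "s * x + c = y0"
      using unique by simp
    then show "x = (y0 - c) / s"
      using assms(1) by (simp add: eq_divide_eq algebra_simps)
  qed
next
  fix x0 assume "x0 \<in> {x. s * x + c \<in> D}" "g (s * x0 + c) = 0"
  then obtain d where cs: "changes_sign_at g (s * x0 + c)"
    and d: "(g has_real_derivative d) (at (s * x0 + c))" "d \<noteq> 0"
    using assms(2) unfolding good_unique_root_def by blast
  show "changes_sign_at (\<lambda>x. g (s * x + c)) x0"
    by (rule changes_sign_at_affine[OF assms(1) cs])
  have "((\<lambda>x. g (s * x + c)) has_real_derivative d * s) (at x0)"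
    by (rule DERIV_chain2[where g = "\<lambda>x. s * x + c" and x = x0, OF d(1)])
      (auto intro!: derivative_eq_intros)
  then show "\<exists>d. ((\<lambda>x. g (s * x + c)) has_real_derivative d) (at x0) \<and> d \<noteq> 0"
    using d(2) assms(1) by (intro exI[of _ "d * s"]) simp
qed

lemma good_unique_root_shift:
  "good_unique_root g D \<Longrightarrow> good_unique_root (\<lambda>x. g (x + c)) {x. x + c \<in> D}"
  using good_unique_root_affine[of 1 g D c] by simp

lemma good_unique_root_reflect:
  "good_unique_root g D \<Longrightarrow> good_unique_root (\<lambda>x. - g (- x)) {x. - x \<in> D}"
  using good_unique_root_uminus[OF good_unique_root_affine[of "-1" g D 0]] by simp

lemma strongly_hyperbolic_level_good_unique_root:
  assumes sh: "strongly_hyperbolic f" and "0 < t"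
  shows "good_unique_root (\<lambda>x. f x - t) {0<..}"
proof -
  obtain x0 where "0 < x0" "f x0 = t"
    using strongly_hyperbolic_attains[OF assms] by blast
  show ?thesis
  proof (rule good_unique_root_of_sign_change[OF \<open>0 < x0\<close>])
    show "f x0 - t = 0"
      using \<open>f x0 = t\<close> by simp
    show "0 < f x - t" if "0 < x" "x < x0" for x
      using strongly_hyperbolic_decreasing[OF sh that] \<open>f x0 = t\<close> by simp
    show "f x - t < 0" if "x0 < x" for x
      using strongly_hyperbolic_decreasing[OF sh \<open>0 < x0\<close> that] \<open>f x0 = t\<close> by simp
    show "((\<lambda>x. f x - t) has_real_derivative deriv f x0 - 0) (at x0)"
      by (intro DERIV_diff strongly_hyperbolic_has_deriv[OF sh \<open>0 < x0\<close>] DERIV_const)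
    show "deriv f x0 - 0 \<noteq> 0"
      using strongly_hyperbolic_deriv_neg[OF sh \<open>0 < x0\<close>] by simp
  qed
qed

lemma strongly_hyperbolic_shift_difference_pos:
  assumes sh: "strongly_hyperbolic f" and "0 < d" "0 < a2" "a2 \<le> a1" "0 < u"
  shows "0 < a1 * f u - a2 * f (u + d)"
proof -
  have "a2 * f (u + d) < a2 * f u"
    using strongly_hyperbolic_decreasing[OF sh, of u "u + d"] assms(2,3,5) by simp
  also have "\<dots> \<le> a1 * f u"
    using strongly_hyperbolic_pos[OF sh \<open>0 < u\<close>] \<open>a2 \<le> a1\<close> by (intro mult_right_mono) simp_all
  finally show ?thesis
    by simp
qed

lemma strongly_hyperbolic_shift_difference_good_unique_root:
  assumes sh: "strongly_hyperbolic f" and "0 < d" "0 < a1" "a1 < a2"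
  shows "good_unique_root (\<lambda>u. a1 * f u - a2 * f (u + d)) {0<..}"
proof -
  have "1 < a2 / a1"
    using assms(3,4) by simp
  then obtain u0 where "0 < u0" and u0: "f u0 / f (u0 + d) = a2 / a1"
    using strongly_hyperbolic_shift_quotient_attains[OF sh \<open>0 < d\<close>] by blast
  have pos: "0 < a1 * f (u + d)" if "0 < u" for u
    using strongly_hyperbolic_pos[OF sh, of "u + d"] that assms(2,3) by simp
  have factor: "a1 * f u - a2 * f (u + d) = a1 * f (u + d) * (f u / f (u + d) - a2 / a1)" if "0 < u" for u
    using strongly_hyperbolic_pos[OF sh, of "u + d"] that assms(2,3) by (simp add: field_simps)
  have balance: "a2 * f (u0 + d) = a1 * f u0"
    using u0 strongly_hyperbolic_pos[OF sh, of "u0 + d"] \<open>0 < u0\<close> assms(2,3) by (simp add: field_simps)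
  show ?thesis
  proof (rule good_unique_root_of_sign_change[OF \<open>0 < u0\<close>])
    show "a1 * f u0 - a2 * f (u0 + d) = 0"
      using balance by simp
    show "0 < a1 * f u - a2 * f (u + d)" if "0 < u" "u < u0" for u
      using factor[OF \<open>0 < u\<close>] pos[OF \<open>0 < u\<close>] u0
        strongly_hyperbolic_shift_quotient_decreasing[OF sh \<open>0 < d\<close> that] by simp
    show "a1 * f u - a2 * f (u + d) < 0" if "u0 < u" for u
      using factor[of u] pos[of u] u0 that \<open>0 < u0\<close>
        strongly_hyperbolic_shift_quotient_decreasing[OF sh \<open>0 < d\<close> \<open>0 < u0\<close> that]
      by (simp add: mult_pos_neg)
    show "((\<lambda>u. a1 * f u - a2 * f (u + d)) has_real_derivative
        a1 * deriv f u0 - a2 * deriv f (u0 + d)) (at u0)"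
      using \<open>0 < u0\<close> \<open>0 < d\<close>
      by (intro DERIV_diff DERIV_cmult strongly_hyperbolic_has_deriv[OF sh]
          strongly_hyperbolic_shift_has_deriv[OF sh]) simp_all
    have "(a1 * deriv f u0 - a2 * deriv f (u0 + d)) * f (u0 + d)
        = a1 * deriv f u0 * f (u0 + d) - (a2 * f (u0 + d)) * deriv f (u0 + d)"
      by (simp add: algebra_simps)
    also have "\<dots> = a1 * (f (u0 + d) * deriv f u0 - f u0 * deriv f (u0 + d))"
      unfolding balance by (simp add: algebra_simps)
    also have "\<dots> < 0"
      using strongly_hyperbolic_shift_cross_less[OF sh \<open>0 < u0\<close> \<open>0 < d\<close>] assms(3)
      by (simp add: mult_pos_neg)
    finally show "a1 * deriv f u0 - a2 * deriv f (u0 + d) \<noteq> 0"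
      by auto
  qed
qed

lemma same_shift_difference_roots:
  fixes f :: "real \<Rightarrow> real" and a1 a2 b c1 c2 :: real
  assumes sh: "strongly_hyperbolic f" and "c1 \<noteq> c2"
  defines "F \<equiv> \<lambda>x. a1 * f (x + b) + c1 - a2 * f (x + b) - c2"
  shows "if a1 \<noteq> a2 \<and> (a2 < a1) = (c1 < c2) then good_unique_root F {- b<..}
    else (\<forall>x\<in>{- b<..}. F x \<noteq> 0)"
proof (cases "a1 = a2")
  case True
  then show ?thesis
    using \<open>c1 \<noteq> c2\<close> by (simp add: F_def)
next
  case False
  define t where "t = (c2 - c1) / (a1 - a2)"
  have F: "F = (\<lambda>x. (a1 - a2) * (f (x + b) - t))"
    using False by (auto simp: F_def t_def field_simps)
  have t_pos: "0 < t \<longleftrightarrow> (a2 < a1) = (c1 < c2)"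
    using False \<open>c1 \<noteq> c2\<close> by (auto simp: t_def zero_less_divide_iff)
  show ?thesis
  proof (cases "0 < t")
    case True
    have "good_unique_root (\<lambda>u. (a1 - a2) * (f u - t)) {0<..}"
      using good_unique_root_cmult strongly_hyperbolic_level_good_unique_root[OF sh True] False
      by simp
    from good_unique_root_shift[OF this, of b]
    have "good_unique_root (\<lambda>x. (a1 - a2) * (f (x + b) - t)) {x. x + b \<in> {0<..}}" .
    moreover have "{x. x + b \<in> {0<..}} = {- b<..}"
      by auto
    ultimately have "good_unique_root (\<lambda>x. (a1 - a2) * (f (x + b) - t)) {- b<..}"
      by simp
    then show ?thesis
      using \<open>a1 \<noteq> a2\<close> True t_pos unfolding F by simp
  next
    case False
    then have "f (x + b) - t \<noteq> 0" if "x \<in> {- b<..}" for x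
      using strongly_hyperbolic_pos[OF sh, of "x + b"] that by auto
    then show ?thesis
      using \<open>a1 \<noteq> a2\<close> False t_pos unfolding F by auto
  qed
qed

lemma distinct_shifts_difference_roots:
  fixes f :: "real \<Rightarrow> real" and a1 a2 b1 b2 :: real
  assumes sh: "strongly_hyperbolic f" and "0 < a1" "0 < a2" "b1 < b2"
  defines "F \<equiv> \<lambda>x. a1 * f (x + b1) - a2 * f (x + b2)"
  shows "if a1 < a2 then good_unique_root F {- b1<..} else (\<forall>x\<in>{- b1<..}. F x \<noteq> 0)"
proof -
  define d where "d = b2 - b1"
  have "0 < d"
    using \<open>b1 < b2\<close> by (simp add: d_def)
  have F: "F = (\<lambda>x. a1 * f (x + b1) - a2 * f (x + b1 + d))"
    by (simp add: F_def d_def)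
  have D: "{x. x + b1 \<in> {0<..}} = {- b1<..}"
    by auto
  show ?thesis
  proof (cases "a1 < a2")
    case True
    then show ?thesis
      using good_unique_root_shift[OF
          strongly_hyperbolic_shift_difference_good_unique_root[OF sh \<open>0 < d\<close> \<open>0 < a1\<close> True], of b1]
      unfolding F D by simp
  next
    case False
    have "a1 * f (x + b1) - a2 * f (x + b1 + d) \<noteq> 0" if "x \<in> {- b1<..}" for x
      using strongly_hyperbolic_shift_difference_pos[OF sh \<open>0 < d\<close> \<open>0 < a2\<close>, of a1 "x + b1"] False that
      by simp
    then show ?thesis
      using False unfolding F by simp
  qed
qed

lemma shifted_difference_roots:
  fixes f :: "real \<Rightarrow> real" and a1 a2 b1 b2 c1 c2 :: real
  assumes sh: "strongly_hyperbolic f" and "0 < a1" "0 < a2"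
    and hbc: "(b1 \<noteq> b2 \<and> c1 = c2) \<or> (b1 = b2 \<and> c1 \<noteq> c2)"
  defines "F \<equiv> \<lambda>x. a1 * f (x + b1) + c1 - a2 * f (x + b2) - c2"
    and "D \<equiv> {max (- b1) (- b2)<..}"
    and "S \<equiv> (if b1 = b2 then (a2 < a1) = (c1 < c2) else (b1 < b2) = (a1 < a2))"
  shows "if a1 \<noteq> a2 \<and> S then good_unique_root F D else (\<forall>x\<in>D. F x \<noteq> 0)"
proof -
  consider "b1 = b2" "c1 \<noteq> c2" | "b1 < b2" "c1 = c2" | "b2 < b1" "c1 = c2"
    using hbc by (cases b1 b2 rule: linorder_cases) auto
  then show ?thesis
  proof cases
    case 1
    then show ?thesis
      using same_shift_difference_roots[OF sh 1(2), of a1 a2 b1]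
      unfolding F_def D_def S_def 1(1)[symmetric] by (simp only: simp_thms if_True max.idem)
  next
    case 2
    have F: "F = (\<lambda>x. a1 * f (x + b1) - a2 * f (x + b2))" and D: "D = {- b1<..}"
      and cond: "a1 \<noteq> a2 \<and> S \<longleftrightarrow> a1 < a2"
      using 2 by (auto simp: F_def D_def S_def)
    show ?thesis
      unfolding F D cond by (rule distinct_shifts_difference_roots[OF sh \<open>0 < a1\<close> \<open>0 < a2\<close> \<open>b1 < b2\<close>])
  next
    case 3
    let ?G = "\<lambda>x. a2 * f (x + b2) - a1 * f (x + b1)"
    have F: "F = (\<lambda>x. - ?G x)" and D: "D = {- b2<..}"
      and cond: "a1 \<noteq> a2 \<and> S \<longleftrightarrow> a2 < a1"
      using 3 by (auto simp: F_def D_def S_def)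
    note swapped = distinct_shifts_difference_roots[OF sh \<open>0 < a2\<close> \<open>0 < a1\<close> \<open>b2 < b1\<close>]
    show ?thesis
    proof (cases "a2 < a1")
      case True
      show ?thesis
        unfolding F D cond if_P[OF True]
        by (rule good_unique_root_uminus[OF swapped[unfolded if_P[OF True]]])
    next
      case False
      then show ?thesis
        unfolding F D cond using swapped
        by (simp only: if_False if_not_P[OF False] neg_equal_0_iff_equal)
    qed
  qed
qed

lemma reflected_difference_roots:
  fixes f :: "real \<Rightarrow> real" and a1 a2 b1 b2 c1 c2 :: real
  assumes sh: "strongly_hyperbolic f" and "0 < a1" "0 < a2"
    and hbc: "(b1 \<noteq> b2 \<and> c1 = c2) \<or> (b1 = b2 \<and> c1 \<noteq> c2)"
  defines "F \<equiv> \<lambda>x. - a1 * f (- x - b1) + c1 + a2 * f (- x - b2) - c2"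
    and "D \<equiv> {..<min (- b1) (- b2)}"
    and "S \<equiv> (if b1 = b2 then (a2 < a1) = (c1 < c2) else (b1 < b2) = (a1 < a2))"
  shows "if a1 \<noteq> a2 \<and> \<not> S then good_unique_root F D else (\<forall>x\<in>D. F x \<noteq> 0)"
proof -
  define G where "G = (\<lambda>x. a1 * f (x - b1) + c2 - a2 * f (x - b2) - c1)"
  define E where "E = {max b1 b2<..}"
  have hbc_reflected: "(- b1 \<noteq> - b2 \<and> c2 = c1) \<or> (- b1 = - b2 \<and> c2 \<noteq> c1)"
    using hbc by auto
  have cond: "(a1 \<noteq> a2 \<and> (if - b1 = - b2 then (a2 < a1) = (c2 < c1) else (- b1 < - b2) = (a1 < a2)))
      \<longleftrightarrow> (a1 \<noteq> a2 \<and> \<not> S)"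
    using hbc unfolding S_def by auto
  have G_roots: "if a1 \<noteq> a2 \<and> \<not> S then good_unique_root G E else (\<forall>x\<in>E. G x \<noteq> 0)"
    using shifted_difference_roots[OF sh \<open>0 < a1\<close> \<open>0 < a2\<close> hbc_reflected]
    unfolding G_def E_def add_uminus_conv_diff minus_minus cond .
  have F: "F = (\<lambda>x. - G (- x))" and D: "D = {x. - x \<in> E}"
    by (auto simp: F_def G_def D_def E_def)
  show ?thesis
  proof (cases "a1 \<noteq> a2 \<and> \<not> S")
    case True
    then show ?thesis
      using G_roots good_unique_root_reflect[of G E] unfolding F D by simp
  next
    case False
    then show ?thesis
      using G_roots unfolding F D if_not_P[OF False] by simp
  qed
qed

theorem lemma3p6:
  fixes f1 f2 :: "real \<Rightarrow> real" and a1 a2 b1 b2 c1 c2 :: real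
  assumes hf1: "strongly_hyperbolic f1" and hf2: "strongly_hyperbolic f2"
    and ha1: "a1 > 0" and ha2: "a2 > 0"
    and hbc: "(b1 \<noteq> b2 \<and> c1 = c2) \<or> (b1 = b2 \<and> c1 \<noteq> c2)"
  defines "fchk \<equiv> (\<lambda>x. a1 * f1 (x + b1) + c1 - a2 * f1 (x + b2) - c2)"
    and "fhat \<equiv> (\<lambda>x. - a1 * f2 (- x - b1) + c1 + a2 * f2 (- x - b2) - c2)"
    and "Dchk \<equiv> {max (- b1) (- b2)<..}"
    and "Dhat \<equiv> {..<min (- b1) (- b2)}"
  shows "(a1 = a2 \<longrightarrow> (\<forall>x\<in>Dchk. fchk x \<noteq> 0) \<and> (\<forall>x\<in>Dhat. fhat x \<noteq> 0))
       \<and> (a1 \<noteq> a2 \<longrightarrow>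
            ((\<exists>!x. x \<in> Dchk \<and> fchk x = 0) \<noteq> (\<exists>!x. x \<in> Dhat \<and> fhat x = 0)) \<and>
            ((\<exists>!x. x \<in> Dchk \<and> fchk x = 0) \<longrightarrow> good_unique_root fchk Dchk) \<and>
            ((\<exists>!x. x \<in> Dhat \<and> fhat x = 0) \<longrightarrow> good_unique_root fhat Dhat))"
proof -
  define S where "S \<longleftrightarrow> (if b1 = b2 then (a2 < a1) = (c1 < c2) else (b1 < b2) = (a1 < a2))"
  have chk: "if a1 \<noteq> a2 \<and> S then good_unique_root fchk Dchk else (\<forall>x\<in>Dchk. fchk x \<noteq> 0)"
    using shifted_difference_roots[OF hf1 ha1 ha2 hbc] unfolding S_def fchk_def Dchk_def .
  have hat: "if a1 \<noteq> a2 \<and> \<not> S then good_unique_root fhat Dhat else (\<forall>x\<in>Dhat. fhat x \<noteq> 0)"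
    using reflected_difference_roots[OF hf2 ha1 ha2 hbc] unfolding S_def fhat_def Dhat_def .
  have "good_unique_root g D \<Longrightarrow> \<exists>!x. x \<in> D \<and> g x = 0" for g D
    unfolding good_unique_root_def by blast
  then show ?thesis
    using chk hat by (cases "a1 = a2"; cases S) auto
qed

end
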